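(* Let $q>0$, $q\neq1$, $\hbar,m>0$. Let $\psi:(\mathbb{R}\setminus\{0\})\times\mathbb{R}\to\mathbb{C}$ be differentiable in $t$, nowhere zero, and satisfy $\partial_t\psi=\frac{i\hbar}{2m}D_x^2\psi$. Define $u(x,t)=-\frac{i\hbar}{m}\frac{D_x\psi(x,t)}{\psi(x,t)}$. Then for all $x\ne0$ and $t$, $$i\hbar\,\partial_tu(x,t)+\frac{\hbar^2}{2m}D_x^2u(x,t)=\frac{i\hbar}{2}u(x,t)\big[(1-M_q^x)D_xu\big](x,t)-\frac{i\hbar}{2}D_x\big(u(qx,t)u(x,t)\big)+\frac m2\big[u(q^2x,t)-u(x,t)\big]u(qx,t)u(x,t).$$
   Context: $D_x$ is the $q$-derivative in $x$ at fixed $t$: $D_xf(x,t)=\frac{f(qx,t)-f(x,t)}{(q-1)x}$, $D_x^2=D_x\circ D_x$; $\partial_t$ is the ordinary time derivative. $M_q^x$ is the dilation operator $(M_q^xf)(x,t)=f(qx,t)$. *)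

theory Defs
  imports "HOL-Analysis.Analysis"
begin

definition qD :: "real \<Rightarrow> (real \<Rightarrow> complex) \<Rightarrow> real \<Rightarrow> complex" where
  "qD q f x = (f (q * x) - f x) / complex_of_real ((q - 1) * x)"

end

theory Submission
  imports Defs
begin

text \<open>Time differentiation commutes with \<open>D\<^sub>x\<close>, so the quotient rule gives \<open>\<partial>\<^sub>t u\<close> in terms of
  \<open>\<partial>\<^sub>t\<psi>\<close>, which the q-Schr\<ouml>dinger equation replaces by \<open>D\<^sub>x\<^sup>2\<psi>\<close>. At a fixed time every term of
  the identity is then a rational function of \<open>\<psi>(x), \<psi>(qx), \<psi>(q\<^sup>2x), \<psi>(q\<^sup>3x)\<close>, and the identity
  is an identity of rational functions.\<close>

lemma has_vector_derivative_qD: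
  assumes "((\<lambda>s. f x s) has_vector_derivative f' x) (at t)"
    and "((\<lambda>s. f (q * x) s) has_vector_derivative f' (q * x)) (at t)"
  shows "((\<lambda>s. qD q (\<lambda>y. f y s) x) has_vector_derivative qD q f' x) (at t)"
  unfolding qD_def using assms by (intro has_vector_derivative_divide has_vector_derivative_diff)

lemma has_vector_derivative_quotient:
  fixes f g :: "real \<Rightarrow> 'a::real_normed_field"
  assumes "(f has_vector_derivative f') (at t)" "(g has_vector_derivative g') (at t)" "g t \<noteq> 0"
  shows "((\<lambda>s. f s / g s) has_vector_derivative (f' * g t - f t * g') / (g t * g t)) (at t)"
proof -
  have "((\<lambda>s. f s / g s) has_derivative
      (\<lambda>h. ((h *\<^sub>R f') * g t - f t * (h *\<^sub>R g')) / (g t * g t))) (at t)"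
    using assms by (intro has_derivative_divide') (auto simp: has_vector_derivative_def)
  moreover have "(\<lambda>h. ((h *\<^sub>R f') * g t - f t * (h *\<^sub>R g')) / (g t * g t))
      = (\<lambda>h. h *\<^sub>R ((f' * g t - f t * g') / (g t * g t)))"
    by (auto simp: fun_eq_iff scaleR_conv_of_real field_simps)
  ultimately show ?thesis by (simp add: has_vector_derivative_def)
qed

lemma has_vector_derivative_q_log_derivative:
  assumes "((\<lambda>s. psi x s) has_vector_derivative psi' x) (at t)"
    and "((\<lambda>s. psi (q * x) s) has_vector_derivative psi' (q * x)) (at t)"
    and "psi x t \<noteq> 0"
  shows "((\<lambda>s. c * qD q (\<lambda>y. psi y s) x / psi x s) has_vector_derivative
      c * ((qD q psi' x * psi x t - qD q (\<lambda>y. psi y t) x * psi' x) / (psi x t * psi x t))) (at t)"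
proof -
  have "((\<lambda>s. c * (qD q (\<lambda>y. psi y s) x / psi x s)) has_vector_derivative
      c * ((qD q psi' x * psi x t - qD q (\<lambda>y. psi y t) x * psi' x) / (psi x t * psi x t))) (at t)"
    using assms
    by (intro has_vector_derivative_mult_right has_vector_derivative_quotient has_vector_derivative_qD)
  then show ?thesis by simp
qed

text \<open>Here \<open>a, b, c, d\<close> are \<open>\<psi>\<close> at \<open>x, qx, q\<^sup>2x, q\<^sup>3x\<close>, \<open>h = (q - 1) x\<close>, \<open>Q = q\<close>,
  \<open>T0, T1\<close> are \<open>\<partial>\<^sub>t\<psi>\<close> at \<open>x, qx\<close> and \<open>u0, u1, u2\<close> are \<open>u\<close> at \<open>x, qx, q\<^sup>2x\<close>.\<close>
lemma q_cole_hopf_algebra: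
  fixes Q h H M a b c d :: complex
  assumes "Q \<noteq> 0" "h \<noteq> 0" "M \<noteq> 0" "a \<noteq> 0" "b \<noteq> 0" "c \<noteq> 0"
  defines "T0 \<equiv> \<i> * H / (2 * M) * (((c - b) / (Q * h) - (b - a) / h) / h)"
    and "T1 \<equiv> \<i> * H / (2 * M) * (((d - c) / (Q * (Q * h)) - (c - b) / (Q * h)) / (Q * h))"
    and "u0 \<equiv> - (\<i> * H / M) * ((b - a) / h) / a"
    and "u1 \<equiv> - (\<i> * H / M) * ((c - b) / (Q * h)) / b"
    and "u2 \<equiv> - (\<i> * H / M) * ((d - c) / (Q * (Q * h))) / c"
  shows "\<i> * H * (- (\<i> * H / M) * (((T1 - T0) / h * a - (b - a) / h * T0) / (a * a)))
       + H\<^sup>2 / (2 * M) * (((u2 - u1) / (Q * h) - (u1 - u0) / h) / h)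
     = \<i> * H / 2 * u0 * ((u1 - u0) / h - (u2 - u1) / (Q * h))
       - \<i> * H / 2 * ((u2 * u1 - u1 * u0) / h)
       + M / 2 * (u2 - u0) * u1 * u0"
  using assms(1-6) unfolding T0_def T1_def u0_def u1_def u2_def
  by (simp add: field_simps) algebra

lemma q_cole_hopf_identity:
  fixes q hbar m x :: real and f g u :: "real \<Rightarrow> complex"
  assumes "q \<noteq> 0" "q \<noteq> 1" "x \<noteq> 0" "m \<noteq> 0"
    and "f x \<noteq> 0" "f (q * x) \<noteq> 0" "f (q * (q * x)) \<noteq> 0"
    and g: "g x = (\<i> * complex_of_real hbar / complex_of_real (2 * m)) * qD q (qD q f) x"
      "g (q * x) = (\<i> * complex_of_real hbar / complex_of_real (2 * m)) * qD q (qD q f) (q * x)"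
    and u: "\<And>y. u y = - (\<i> * complex_of_real hbar / complex_of_real m) * qD q f y / f y"
  shows "\<i> * hbar * (- (\<i> * hbar / m) * ((qD q g x * f x - qD q f x * g x) / (f x * f x)))
       + complex_of_real (hbar ^ 2 / (2 * m)) * qD q (qD q u) x
     = \<i> * hbar / 2 * u x * (qD q u x - qD q u (q * x))
       - \<i> * hbar / 2 * qD q (\<lambda>y. u (q * y) * u y) x
       + complex_of_real (m / 2) * (u (q ^ 2 * x) - u x) * u (q * x) * u x"
proof -
  define Q h where "Q = complex_of_real q" and "h = complex_of_real ((q - 1) * x)"
  have "Q \<noteq> 0" "h \<noteq> 0" "complex_of_real m \<noteq> 0"
    using assms(1-4) by (auto simp: Q_def h_def)
  have qD0: "qD q F x = (F (q * x) - F x) / h" for F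
    by (simp add: qD_def h_def)
  have qD1: "qD q F (q * x) = (F (q * (q * x)) - F (q * x)) / (Q * h)" for F
    by (simp add: qD_def h_def Q_def mult_ac)
  have qD2: "qD q F (q * (q * x)) = (F (q * (q * (q * x))) - F (q * (q * x))) / (Q * (Q * h))" for F
    by (simp add: qD_def h_def Q_def mult_ac)
  have "q ^ 2 * x = q * (q * x)"
    by (simp add: power2_eq_square)
  show ?thesis
    unfolding \<open>q ^ 2 * x = q * (q * x)\<close> qD0 qD1 g u qD2
    using q_cole_hopf_algebra[OF \<open>Q \<noteq> 0\<close> \<open>h \<noteq> 0\<close> \<open>complex_of_real m \<noteq> 0\<close> assms(5-7),
        where H = "complex_of_real hbar" and d = "f (q * (q * (q * x)))"]
    by (simp add: power2_eq_square)
qed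

theorem mainTheorem14:
  fixes q hbar m :: real and psi u :: "real \<Rightarrow> real \<Rightarrow> complex"
  assumes "q > 0" and "q \<noteq> 1" and "hbar > 0" and "m > 0"
    and diff: "\<forall>x t. x \<noteq> 0 \<longrightarrow> (\<lambda>s. psi x s) differentiable (at t)"
    and nz: "\<forall>x t. x \<noteq> 0 \<longrightarrow> psi x t \<noteq> 0"
    and schr: "\<forall>x t. x \<noteq> 0 \<longrightarrow>
       vector_derivative (\<lambda>s. psi x s) (at t)
         = (\<i> * complex_of_real hbar / complex_of_real (2 * m)) * qD q (qD q (\<lambda>y. psi y t)) x"
    and u_def: "\<forall>x t. u x t
         = - (\<i> * complex_of_real hbar / complex_of_real m) * qD q (\<lambda>y. psi y t) x / psi x t"
  shows "\<forall>x t. x \<noteq> 0 \<longrightarrow>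
     \<i> * complex_of_real hbar * vector_derivative (\<lambda>s. u x s) (at t)
       + complex_of_real (hbar ^ 2 / (2 * m)) * qD q (qD q (\<lambda>y. u y t)) x
     = \<i> * complex_of_real hbar / 2 * u x t * (qD q (\<lambda>y. u y t) x - qD q (\<lambda>y. u y t) (q * x))
       - \<i> * complex_of_real hbar / 2 * qD q (\<lambda>y. u (q * y) t * u y t) x
       + complex_of_real (m / 2) * (u (q ^ 2 * x) t - u x t) * u (q * x) t * u x t"
proof (intro allI impI, goal_cases)
  case (1 x t)
  have "q \<noteq> 0" using \<open>q > 0\<close> by simp
  define psi' where "psi' y = vector_derivative (\<lambda>s. psi y s) (at t)" for y
  have psi': "((\<lambda>s. psi y s) has_vector_derivative psi' y) (at t)" if "y \<noteq> 0" for y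
    using diff that unfolding psi'_def by (blast intro: vector_derivative_works[THEN iffD1])
  have u_fun: "(\<lambda>s. u x s) = (\<lambda>s. - (\<i> * hbar / m) * qD q (\<lambda>y. psi y s) x / psi x s)"
    using u_def by auto
  have u_deriv: "vector_derivative (\<lambda>s. u x s) (at t)
      = - (\<i> * hbar / m) * ((qD q psi' x * psi x t - qD q (\<lambda>y. psi y t) x * psi' x)
        / (psi x t * psi x t))"
    unfolding u_fun using 1 \<open>q \<noteq> 0\<close> nz
    by (intro vector_derivative_at has_vector_derivative_q_log_derivative psi') auto
  show ?case
    unfolding u_deriv
    by (rule q_cole_hopf_identity[where f = "\<lambda>y. psi y t" and g = psi' and u = "\<lambda>y. u y t"])
      (use 1 \<open>q \<noteq> 0\<close> \<open>q \<noteq> 1\<close> \<open>m > 0\<close> nz schr u_def in \<open>auto simp: psi'_def\<close>)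
qed

end
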